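(* Let $\{\mu_t\}$ be a free convolution semigroup as described in the context. Any martingale polynomial for $\{\mu_t\}$ is a (finite) linear combination, with complex coefficients, of the elements of the standard Sheffer system for $\{\mu_t\}$.
   Context: Let $\mu$ be a freely infinitely divisible probability measure on $\mathbb R$ with finite moments of all orders, and $\{\mu_t\}_{t\ge0}$ the free convolution semigroup with $\mu_0=\delta_0$, $\mu_1=\mu$, $R_{\mu_t}=tR_\mu$. Write $G_t(z)=\sum_n\langle\mu_t,x^n\rangle z^{-(n+1)}$ (Cauchy transform, formal series in $z^{-1}$), $K_t$ its compositional inverse, $K_t(z)=\frac1z+t\sum_{n\ge1}r_nz^{n-1}$ with $r_n$ the free cumulants of $\mu$, and $F_{s,t}=K_s\circ G_t$. Let $\mathrm{Res}_z(x)=\frac{1}{z-x}=\sum_{n\ge0}x^nz^{-(n+1)}$. For $s\le t$, $\mathcal K_{s,t}$ is the linear operator on $\mathbb C[x]$ determined (coefficientwise in the formal expansion in $z^{-1}$) by $\mathcal K_{s,t}(\mathrm{Res}_z)=\mathrm{Res}_{F_{s,t}(z)}$; these are the transition operators of the free Lévy process with distributions $\mu_t$, i.e. $\mathbb E_s[f(X(t))]=(\mathcal K_{s,t}f)(X(s))$. A martingale polynomial for $\{\mu_t\}$ is a function $p(x,t)$, polynomial in $x$ for each $t$, with $\mathcal K_{s,t}(p(\cdot,t))=p(\cdot,s)$ for all $s<t$. The standard Sheffer system for $\{\mu_t\}$ is the family $\{Q_n(x,t)\}_{n\ge0}$ defined by $\frac{1}{z(K_t(z)-x)}=\sum_{n\ge0}Q_n(x,t)z^n$;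 $Q_n$ is monic of degree $n$ in $x$. *)

theory Defs
  imports "HOL-Probability.Probability" "HOL-Computational_Algebra.Polynomial"
    "HOL-Computational_Algebra.Formal_Power_Series"
begin

text \<open>All formal series in z^{-1} are written as formal power series in w = z^{-1}.\<close>

definition mom :: "real measure \<Rightarrow> nat \<Rightarrow> complex" where
  "mom M n = complex_of_real (integral\<^sup>L M (\<lambda>x. x ^ n))"

text \<open>Cauchy transform G_M(z) = sum_n m_n z^{-(n+1)}, written as a power series in w = 1/z:
  cauchy_fps M = sum_n m_n w^(n+1).\<close>
definition cauchy_fps :: "real measure \<Rightarrow> complex fps" where
  "cauchy_fps M = fps_X * Abs_fps (mom M)"

text \<open>K_M is the compositional inverse of G_M. In the variable w = 1/z this means
  1 / K_M(zeta) = fps_inv (cauchy_fps M) (zeta).  zK_fps M is the power series zeta * K_M(zeta).\<close>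
definition zK_fps :: "real measure \<Rightarrow> complex fps" where
  "zK_fps M = fps_X / fps_inv (cauchy_fps M)"

text \<open>Free cumulants: K_M(z) = 1/z + sum_{n>=1} r_n z^(n-1), i.e. z K_M(z) = 1 + sum r_n z^n.\<close>
definition free_cumulant :: "real measure \<Rightarrow> nat \<Rightarrow> complex" where
  "free_cumulant M n = fps_nth (zK_fps M) n"

definition prob_with_moments :: "real measure \<Rightarrow> bool" where
  "prob_with_moments M \<longleftrightarrow> prob_space M \<and> sets M = sets borel \<and>
     (\<forall>n::nat. integrable M (\<lambda>x. x ^ n))"

text \<open>{mu t}_{t>=0} is the free convolution semigroup of mu = mu 1:
  mu 0 = delta_0, and R_{mu_t} = t R_mu, i.e. the free cumulants of mu t are t times those of mu.\<close>
definition free_conv_semigroup :: "(real \<Rightarrow> real measure) \<Rightarrow> bool" where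
  "free_conv_semigroup mu \<longleftrightarrow>
     (\<forall>t\<ge>0. prob_with_moments (mu t)) \<and> mu 0 = return borel 0 \<and>
     (\<forall>t\<ge>0. \<forall>n\<ge>1. free_cumulant (mu t) n = complex_of_real t * free_cumulant (mu 1) n)"

text \<open>u_{s,t}(w) = 1 / F_{s,t}(1/w) where F_{s,t} = K_s o G_t.
  Since K_s(zeta) = (zeta K_s(zeta)) / zeta, we get u = G_t / ((zK_s) o G_t).\<close>
definition u_fps :: "(real \<Rightarrow> real measure) \<Rightarrow> real \<Rightarrow> real \<Rightarrow> complex fps" where
  "u_fps mu s t = cauchy_fps (mu t) * inverse (zK_fps (mu s) oo cauchy_fps (mu t))"

text \<open>K_{s,t}(Res_z) = Res_{F_{s,t}(z)}:  sum_k K_{s,t}(x^k) w^(k+1) = sum_n x^n u(w)^(n+1).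
  Comparing coefficients of w^(k+1) (only n <= k contribute, as u = w + O(w^2)):\<close>
definition Kmon :: "(real \<Rightarrow> real measure) \<Rightarrow> real \<Rightarrow> real \<Rightarrow> nat \<Rightarrow> complex poly" where
  "Kmon mu s t k = (\<Sum>n\<le>k. monom (fps_nth (u_fps mu s t ^ (n + 1)) (k + 1)) n)"

definition Kop :: "(real \<Rightarrow> real measure) \<Rightarrow> real \<Rightarrow> real \<Rightarrow> complex poly \<Rightarrow> complex poly" where
  "Kop mu s t p = (\<Sum>k\<le>degree p. smult (coeff p k) (Kmon mu s t k))"

definition martingale_poly :: "(real \<Rightarrow> real measure) \<Rightarrow> (real \<Rightarrow> complex poly) \<Rightarrow> bool" where
  "martingale_poly mu p \<longleftrightarrow> (\<forall>s t. 0 \<le> s \<longrightarrow> s < t \<longrightarrow> Kop mu s t (p t) = p s)"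

text \<open>Standard Sheffer system: 1/(z(K_t(z) - x)) = sum_n Q_n(x,t) z^n, i.e.
  Q_n(x,t) is the n-th coefficient of inverse (zK_t(z) - x z).\<close>
definition sheffer_Q :: "(real \<Rightarrow> real measure) \<Rightarrow> nat \<Rightarrow> complex \<Rightarrow> real \<Rightarrow> complex" where
  "sheffer_Q mu n x t = fps_nth (inverse (zK_fps (mu t) - fps_const x * fps_X)) n"

end

theory Submission
  imports Defs
begin

text \<open>Since mu_0 = delta_0 we have K_0(z) = 1/z, hence F_{0,t} = 1/G_t, and the transition
  operator K_{0,t} maps x^k to sum_n [w^(k+1)] G_t(w)^(n+1) x^n, where w = 1/z. Expanding
  1/(z(K_t(z) - x)) as a geometric series in the compositional inverse V_t of G_t gives
  Q_n(x,t) = sum_j [w^(n+1)] V_t(w)^(j+1) x^j. The two coefficient matrices are mutually inverse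
  because V_t o G_t = id, so the martingale condition at s = 0, K_{0,t} p(.,t) = p(.,0), inverts to
  p(.,t) = sum_n [x^n] p(.,0) Q_n(.,t).\<close>

definition poly_linear_ext :: "(nat \<Rightarrow> 'a::comm_ring_1 poly) \<Rightarrow> 'a poly \<Rightarrow> 'a poly" where
  "poly_linear_ext f p = (\<Sum>k\<le>degree p. smult (coeff p k) (f k))"

lemma poly_linear_ext_atMost:
  "degree p \<le> m \<Longrightarrow> poly_linear_ext f p = (\<Sum>k\<le>m. smult (coeff p k) (f k))"
  unfolding poly_linear_ext_def by (rule sum.mono_neutral_left) (auto simp: coeff_eq_0)

lemma poly_linear_ext_0 [simp]: "poly_linear_ext f 0 = 0"
  by (simp add: poly_linear_ext_def)

lemma poly_linear_ext_add: "poly_linear_ext f (p + q) = poly_linear_ext f p + poly_linear_ext f q"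
proof -
  let ?m = "max (degree p) (degree q)"
  have "degree (p + q) \<le> ?m"
    by (rule degree_add_le) auto
  then show ?thesis
    by (simp add: poly_linear_ext_atMost[of _ ?m] smult_add_left sum.distrib)
qed

lemma poly_linear_ext_sum: "poly_linear_ext f (sum g A) = (\<Sum>i\<in>A. poly_linear_ext f (g i))"
  by (induction A rule: infinite_finite_induct) (auto simp: poly_linear_ext_add)

lemma smult_sum_right: "smult c (sum f A) = (\<Sum>i\<in>A. smult c (f i))"
  by (induction A rule: infinite_finite_induct) (auto simp: smult_add_right)

lemma poly_linear_ext_smult: "poly_linear_ext f (smult c p) = smult c (poly_linear_ext f p)"
  by (simp add: poly_linear_ext_atMost[OF degree_smult_le] poly_linear_ext_def[of f p]
      smult_sum_right smult_smult)

lemma poly_linear_ext_monom: "poly_linear_ext f (monom c k) = smult c (f k)"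
proof -
  have "poly_linear_ext f (monom c k) = (\<Sum>i\<le>k. if i = k then smult c (f i) else 0)"
    by (intro poly_linear_ext_atMost[OF degree_monom_le, THEN trans] sum.cong)
      (auto simp: coeff_monom)
  then show ?thesis by simp
qed

lemma poly_linear_ext_monom_1 [simp]: "poly_linear_ext (monom 1) p = p"
  by (simp add: poly_linear_ext_def smult_monom poly_as_sum_of_monoms)

definition power_coeff_poly :: "'a::comm_ring_1 fps \<Rightarrow> nat \<Rightarrow> 'a poly" where
  "power_coeff_poly G k = (\<Sum>n\<le>k. monom (fps_nth (G ^ (n + 1)) (k + 1)) n)"

lemma coeff_power_coeff_poly:
  assumes "fps_nth G 0 = 0"
  shows "coeff (power_coeff_poly G k) j = fps_nth (G ^ (j + 1)) (k + 1)"
proof (cases "j \<le> k")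
  case True
  then show ?thesis
    by (simp add: power_coeff_poly_def coeff_sum coeff_monom)
next
  case False
  then show ?thesis
    using startsby_zero_power_prefix[OF assms, of "j + 1"]
    by (simp add: power_coeff_poly_def coeff_sum coeff_monom)
qed

lemma power_coeff_poly_fps_X: "power_coeff_poly fps_X = monom 1"
  by (intro ext poly_eqI) (simp add: coeff_power_coeff_poly fps_X_power_nth coeff_monom del: power_Suc)

lemma fps_compose_nth_Suc:
  "fps_nth (F oo G) (Suc k) = (\<Sum>n\<le>k. fps_nth F (Suc n) * fps_nth (G ^ Suc n) (Suc k))"
  unfolding fps_compose_nth atLeast0AtMost sum.atMost_Suc_shift by simp

lemma fps_inv_power_coeffs_inverse:
  assumes G0: "fps_nth G 0 = 0" and G1: "fps_nth G 1 \<noteq> 0"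
  shows "(\<Sum>n\<le>k. fps_nth (G ^ (n + 1)) (k + 1) * fps_nth (fps_inv G ^ (j + 1)) (n + 1))
           = (if j = k then 1 else 0)"
proof -
  have "fps_inv G ^ (j + 1) oo G = (fps_inv G oo G) ^ (j + 1)"
    by (rule fps_compose_power[OF G0, symmetric])
  also have "\<dots> = fps_X ^ (j + 1)"
    by (simp add: fps_inv[OF G0 G1])
  finally have "fps_nth (fps_inv G ^ (j + 1) oo G) (k + 1) = fps_nth (fps_X ^ (j + 1)) (k + 1)"
    by simp
  then show ?thesis
    by (simp add: fps_compose_nth_Suc fps_X_power_nth mult.commute del: power_Suc)
qed

lemma poly_linear_ext_power_coeff_poly_fps_inv:
  assumes G0: "fps_nth G 0 = 0" and G1: "fps_nth G 1 \<noteq> 0"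
  shows "poly_linear_ext (power_coeff_poly (fps_inv G)) (poly_linear_ext (power_coeff_poly G) q) = q"
proof -
  have V0: "fps_nth (fps_inv G) 0 = 0"
    by (simp add: fps_inv_def)
  have column: "poly_linear_ext (power_coeff_poly (fps_inv G)) (power_coeff_poly G k) = monom 1 k"
    for k
  proof (rule poly_eqI)
    fix j
    have "coeff (poly_linear_ext (power_coeff_poly (fps_inv G)) (power_coeff_poly G k)) j
          = (\<Sum>n\<le>k. fps_nth (G ^ (n + 1)) (k + 1) * fps_nth (fps_inv G ^ (j + 1)) (n + 1))"
      by (simp add: power_coeff_poly_def[of G] poly_linear_ext_sum poly_linear_ext_monom coeff_sum
          coeff_power_coeff_poly[OF V0] del: power_Suc)
    then show "coeff (poly_linear_ext (power_coeff_poly (fps_inv G)) (power_coeff_poly G k)) j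
          = coeff (monom 1 k) j"
      using fps_inv_power_coeffs_inverse[OF G0 G1, of k j] by (simp add: coeff_monom del: power_Suc)
  qed
  show ?thesis
    by (simp add: poly_linear_ext_def[of "power_coeff_poly G"] poly_linear_ext_sum
        poly_linear_ext_smult column smult_monom poly_as_sum_of_monoms)
qed

lemma fps_nth_inverse_X_div_sub:
  fixes V :: "'a::field_char_0 fps"
  assumes V0: "fps_nth V 0 = 0" and V1: "fps_nth V 1 \<noteq> 0"
  shows "fps_nth (inverse (fps_X / V - fps_const c * fps_X)) n = poly (power_coeff_poly V n) c"
proof -
  define I where "I = inverse (1 - fps_const c * V)"
  define B where "B = (fps_X * inverse (1 - fps_const c * fps_X)) oo V"
  have geometric: "inverse (1 - fps_const c * fps_X) = Abs_fps (\<lambda>k. c ^ k)"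
    using one_minus_const_fps_X_neg_power'[of 1 c] by simp
  have B_nth: "fps_nth B (Suc n) = poly (power_coeff_poly V n) c"
    unfolding B_def geometric
    by (simp add: fps_compose_nth_Suc power_coeff_poly_def poly_sum poly_monom mult.commute)
  have B_eq: "B = V * I"
    by (simp add: B_def I_def fps_compose_mult_distrib[OF V0] fps_inverse_compose[OF V0]
        fps_compose_sub_distrib V0)
  have "V dvd fps_X"
    using V1 by (subst fps_dvd_iff) (auto intro: subdegree_leI)
  then have "fps_X / V * V = fps_X"
    by simp
  then have "(fps_X / V - fps_const c * fps_X) * B = fps_X * ((1 - fps_const c * V) * I)"
    unfolding B_eq
    by (metis (no_types, lifting) mult.assoc mult.commute right_diff_distrib mult.right_neutral)
  also have "\<dots> = fps_X"
    by (simp add: I_def inverse_mult_eq_1' V0)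
  also have "B = fps_X * fps_shift 1 B"
    by (rule fps_ext) (simp add: B_def V0)
  finally have "(fps_X / V - fps_const c * fps_X) * fps_shift 1 B = 1"
    by (simp add: mult.left_commute[of fps_X])
  then have "inverse (fps_X / V - fps_const c * fps_X) = fps_shift 1 B"
    by (rule fps_inverse_unique)
  then show ?thesis
    by (simp add: B_nth)
qed

lemma cauchy_fps_nth_0: "fps_nth (cauchy_fps M) 0 = 0"
  by (simp add: cauchy_fps_def)

lemma cauchy_fps_nth_1:
  assumes "prob_with_moments M"
  shows "fps_nth (cauchy_fps M) 1 = 1"
proof -
  interpret prob_space M
    using assms by (simp add: prob_with_moments_def)
  show ?thesis
    by (simp add: cauchy_fps_def mom_def prob_space)
qed

lemma cauchy_fps_return_0: "cauchy_fps (return borel (0::real)) = fps_X"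
proof -
  have "Abs_fps (mom (return borel 0)) = 1"
    by (rule fps_ext) (simp add: mom_def integral_return)
  then show ?thesis
    by (simp add: cauchy_fps_def)
qed

lemma fps_inv_fps_X: "fps_inv (fps_X :: 'a::field fps) = fps_X"
  using fps_inv[of "fps_X :: 'a fps"] by simp

lemma zK_fps_return_0: "zK_fps (return borel (0::real)) = 1"
  by (simp add: zK_fps_def cauchy_fps_return_0 fps_inv_fps_X)

lemma u_fps_0_left: "mu 0 = return borel 0 \<Longrightarrow> u_fps mu 0 t = cauchy_fps (mu t)"
  by (simp add: u_fps_def zK_fps_return_0)

lemma Kop_eq_poly_linear_ext: "Kop mu s t = poly_linear_ext (power_coeff_poly (u_fps mu s t))"
  by (simp add: fun_eq_iff Kop_def Kmon_def poly_linear_ext_def power_coeff_poly_def)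

lemma sheffer_Q_eq_poly:
  assumes "prob_with_moments (mu t)"
  shows "sheffer_Q mu n x t = poly (power_coeff_poly (fps_inv (cauchy_fps (mu t))) n) x"
proof -
  let ?V = "fps_inv (cauchy_fps (mu t))"
  have "fps_nth ?V 0 = 0" "fps_nth ?V 1 \<noteq> 0"
    using cauchy_fps_nth_1[OF assms] by (simp_all add: fps_inv_def)
  then show ?thesis
    using fps_nth_inverse_X_div_sub by (simp add: sheffer_Q_def zK_fps_def)
qed

lemma martingale_poly_eq_poly_linear_ext:
  assumes "martingale_poly mu p" and "mu 0 = return borel 0" and "t \<ge> 0"
    and "prob_with_moments (mu t)"
  shows "p t = poly_linear_ext (power_coeff_poly (fps_inv (cauchy_fps (mu t)))) (p 0)"
proof (cases "t = 0")
  case True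
  then show ?thesis
    using assms(2) by (simp add: cauchy_fps_return_0 fps_inv_fps_X power_coeff_poly_fps_X)
next
  case False
  then have "Kop mu 0 t (p t) = p 0"
    using assms(1,3) by (simp add: martingale_poly_def)
  then have "poly_linear_ext (power_coeff_poly (cauchy_fps (mu t))) (p t) = p 0"
    using assms(2) by (simp add: Kop_eq_poly_linear_ext u_fps_0_left)
  moreover have "fps_nth (cauchy_fps (mu t)) 1 \<noteq> 0"
    using cauchy_fps_nth_1[OF assms(4)] by simp
  ultimately show ?thesis
    by (metis poly_linear_ext_power_coeff_poly_fps_inv cauchy_fps_nth_0)
qed

theorem lemma2p1:
  fixes mu :: "real \<Rightarrow> real measure" and p :: "real \<Rightarrow> complex poly"
  assumes "free_conv_semigroup mu"
    and "martingale_poly mu p"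
  shows "\<exists>N::nat. \<exists>c :: nat \<Rightarrow> complex. \<forall>t\<ge>0. \<forall>x::complex.
           poly (p t) x = (\<Sum>n\<le>N. c n * sheffer_Q mu n x t)"
proof (intro exI allI impI)
  fix t :: real and x :: complex
  assume t: "t \<ge> 0"
  have mu0: "mu 0 = return borel 0" and moments: "prob_with_moments (mu t)"
    using assms(1) t by (simp_all add: free_conv_semigroup_def)
  have "p t = poly_linear_ext (power_coeff_poly (fps_inv (cauchy_fps (mu t)))) (p 0)"
    by (rule martingale_poly_eq_poly_linear_ext[OF assms(2) mu0 t moments])
  then show "poly (p t) x = (\<Sum>n\<le>degree (p 0). coeff (p 0) n * sheffer_Q mu n x t)"
    by (simp add: poly_linear_ext_def poly_sum sheffer_Q_eq_poly[of mu t, OF moments])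
qed

end
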